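(* Let $h_{2i}:=\frac{(-1)^{i}\cdot 2^{2i+1}\cdot(2^{2i-1}-1)\cdot B_i}{(2i)!}$ and $h_{2i-1}:=0$ for $i\geq1$, and for an integer partition $\lambda$ define $$h_{\lambda}=\frac{(-1)^{l(\lambda)}}{\prod_{i\geq1}m_i(\lambda)!}\sum_{\pi\in\Pi_{l(\lambda)}}\Big\{(-1)^{l(\pi)}\prod_{i=1}^{l(\pi)}\big[(|\pi_i|-1)!\cdot h_{\lambda_{\pi_i}}\big]\Big\}.$$ If $m_i(\lambda)\in\{0,1\}$ for all $i$ (i.e. the parts of $\lambda$ are mutually distinct), then the $2$-adic valuation satisfies $\nu_2(h_\lambda)\geq1$.
   Context: $B_i>0$ are the unsigned Bernoulli numbers defined by $\frac{x}{\sinh x}=1+\sum_{i\geq1}\frac{(-1)^i(2^{2i}-2)B_i}{(2i)!}x^{2i}$. For a nonzero integer $k$, $\nu_2(k)$ is the largest $t\ge0$ with $2^t\mid k$, $\nu_2(0)=\infty$, and for rationals $\nu_2(k_1/k_2)=\nu_2(k_1)-\nu_2(k_2)$. For a partition $\lambda$: $l(\lambda)$ length, $m_i(\lambda)$ the number of parts equal to $i$. $\Pi_n$ is the set of set partitions of $\{1,\ldots,n\}$; for $\pi=\{\pi_1,\ldots,\pi_{l(\pi)}\}\in\Pi_{l(\lambda)}$, $l(\pi)$ is its number of blocks, $|\pi_i|$ block size, $\lambda_{\pi_i}:=\sum_{j\in\pi_i}\lambda_j$. *)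

theory Defs
  imports "HOL-Computational_Algebra.Computational_Algebra" "HOL-Library.Disjoint_Sets"
    "HOL-Library.Extended_Real"
begin

definition x_over_sinh :: "rat fps" where
  "x_over_sinh = fps_X / (fps_const (1/2) * (fps_exp 1 - fps_exp (-1)))"

text \<open>Unsigned Bernoulli numbers B_i (i >= 1), defined by
  x/sinh x = 1 + sum_{i>=1} (-1)^i (2^(2i)-2) B_i / (2i)! x^(2i).\<close>
definition bernU :: "nat \<Rightarrow> rat" where
  "bernU i = fps_nth x_over_sinh (2*i) * fact (2*i) / ((-1)^i * (2^(2*i) - 2))"

text \<open>h_n: h_{2i} as given, h_{2i-1} = 0 (i >= 1); h_0 is never used (set to 0).\<close>
definition hcoef :: "nat \<Rightarrow> rat" where
  "hcoef n = (if n = 0 \<or> odd n then 0 else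
     (let i = n div 2 in
       (-1)^i * 2^(2*i+1) * (2^(2*i-1) - 1) * bernU i / fact (2*i)))"

text \<open>h_lambda for a partition lambda given as a list of its parts (positions 0..l-1).\<close>
definition hpart :: "nat list \<Rightarrow> rat" where
  "hpart lam = (-1)^(length lam) / (\<Prod>i\<in>set lam. fact (count (mset lam) i)) *
     (\<Sum>P\<in>{P. partition_on {0..<length lam} P}.
        (-1)^(card P) * (\<Prod>b\<in>P. fact (card b - 1) * hcoef (\<Sum>j\<in>b. lam ! j)))"

definition nu2 :: "rat \<Rightarrow> ereal" where
  "nu2 q = (if q = 0 then \<infinity> else
     (case quotient_of q of (a, b) \<Rightarrow>
        ereal (of_int (int (multiplicity (2::int) a) - int (multiplicity (2::int) b)))))"

end

theory Submission
  imports Defs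
begin

text \<open>Since \<open>h\<^sub>n = 2\<^sup>n [x\<^sup>n] (x / sinh x)\<close> for \<open>n \<ge> 1\<close>, the \<open>h\<^sub>n\<close> are the coefficients of the inverse of
  \<open>sinh (2x) / (2x) = \<Sum>\<^sub>k (2x)\<^sup>2\<^sup>k / (2k+1)!\<close>. Because \<open>\<nu>\<^sub>2(m!) \<le> m - 1\<close>, every non-constant
  coefficient of that series lies in \<open>2\<int>\<^sub>(\<^sub>2\<^sub>)\<close>, and so does every non-constant coefficient of its
  inverse. Each term of \<open>h\<^sub>\<lambda>\<close> is an integer times a non-empty product of \<open>h\<close>'s, and for
  distinct parts the prefactor is \<open>\<plusminus>1\<close>.\<close>

definition two_integral :: "rat \<Rightarrow> bool" where
  "two_integral q \<longleftrightarrow> (\<exists>a b::int. odd b \<and> q = of_int a / of_int b)"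

definition two_divisible :: "rat \<Rightarrow> bool" where
  "two_divisible q \<longleftrightarrow> two_integral (q / 2)"

lemma two_integral_of_int: "two_integral (of_int a)"
  unfolding two_integral_def by (rule exI[of _ a], rule exI[of _ 1]) simp

lemma two_integral_of_nat: "two_integral (of_nat a)"
  using two_integral_of_int[of "int a"] by simp

lemma two_integral_fact: "two_integral (fact n)"
  using two_integral_of_nat[of "fact n"] by simp

lemma two_integral_neg_one_power: "two_integral ((-1) ^ n)"
  using two_integral_of_int[of "(-1) ^ n"] by simp

lemma two_integral_add:
  assumes "two_integral x" "two_integral y"
  shows "two_integral (x + y)"
proof -
  obtain a b c d :: int
    where h: "odd b" "x = of_int a / of_int b" "odd d" "y = of_int c / of_int d"
    using assms unfolding two_integral_def by blast
  then have "b \<noteq> 0" "d \<noteq> 0" by auto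
  then have "x + y = of_int (a * d + c * b) / of_int (b * d)"
    using h by (simp add: field_simps)
  moreover have "odd (b * d)" using h by simp
  ultimately show ?thesis unfolding two_integral_def by blast
qed

lemma two_integral_mult:
  assumes "two_integral x" "two_integral y"
  shows "two_integral (x * y)"
proof -
  obtain a b c d :: int
    where h: "odd b" "x = of_int a / of_int b" "odd d" "y = of_int c / of_int d"
    using assms unfolding two_integral_def by blast
  then have "x * y = of_int (a * c) / of_int (b * d)" by simp
  moreover have "odd (b * d)" using h by simp
  ultimately show ?thesis unfolding two_integral_def by blast
qed

lemma two_integral_divide_odd:
  assumes "two_integral x" "odd b"
  shows "two_integral (x / of_int b)"
proof -
  obtain a c :: int where h: "odd c" "x = of_int a / of_int c"
    using assms unfolding two_integral_def by blast
  then have "x / of_int b = of_int a / of_int (c * b)" by simp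
  moreover have "odd (c * b)" using h assms by simp
  ultimately show ?thesis unfolding two_integral_def by blast
qed

lemma two_divisible_imp_two_integral: "two_divisible x \<Longrightarrow> two_integral x"
  unfolding two_divisible_def using two_integral_mult[OF two_integral_of_int[of 2], of "x/2"]
  by simp

lemma two_divisible_double: "two_integral x \<Longrightarrow> two_divisible (2 * x)"
  unfolding two_divisible_def by simp

lemma two_divisible_zero: "two_divisible 0"
  using two_divisible_double[OF two_integral_of_int[of 0]] by simp

lemma two_divisible_add: "two_divisible x \<Longrightarrow> two_divisible y \<Longrightarrow> two_divisible (x + y)"
  unfolding two_divisible_def using two_integral_add[of "x/2" "y/2"]
  by (simp add: add_divide_distrib)

lemma two_divisible_mult: "two_divisible x \<Longrightarrow> two_integral y \<Longrightarrow> two_divisible (x * y)"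
  unfolding two_divisible_def using two_integral_mult[of "x/2" y] by simp

lemma two_divisible_mult_left: "two_integral x \<Longrightarrow> two_divisible y \<Longrightarrow> two_divisible (x * y)"
  using two_divisible_mult[of y x] by (simp add: mult.commute)

lemma two_divisible_uminus: "two_divisible x \<Longrightarrow> two_divisible (- x)"
  using two_divisible_mult[OF _ two_integral_of_int[of "-1"], of x] by simp

lemma two_divisible_divide_odd: "two_divisible x \<Longrightarrow> odd b \<Longrightarrow> two_divisible (x / of_int b)"
  unfolding two_divisible_def using two_integral_divide_odd[of "x/2" b]
  by (simp add: mult.commute)

lemma two_divisible_sum: "(\<And>i. i \<in> A \<Longrightarrow> two_divisible (f i)) \<Longrightarrow> two_divisible (sum f A)"
  by (induction A rule: infinite_finite_induct) (simp_all add: two_divisible_zero two_divisible_add)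

lemma two_divisible_prod:
  "finite A \<Longrightarrow> A \<noteq> {} \<Longrightarrow> (\<And>i. i \<in> A \<Longrightarrow> two_divisible (f i)) \<Longrightarrow> two_divisible (prod f A)"
  by (induction A rule: finite_ne_induct)
    (simp_all add: two_divisible_mult two_divisible_imp_two_integral)

lemma two_divisible_imp_nu2_ge_1:
  assumes "two_divisible q"
  shows "nu2 q \<ge> 1"
proof (cases "q = 0")
  case True
  then show ?thesis by (simp add: nu2_def)
next
  case False
  obtain a b :: int where ab: "odd b" "q / 2 = of_int a / of_int b"
    using assms unfolding two_divisible_def two_integral_def by blast
  obtain p r where pr: "quotient_of q = (p, r)" by (cases "quotient_of q")
  have "q = of_int (2 * a) / of_int b"
    using ab(2) by (metis mult_2 of_int_mult of_int_numeral times_divide_eq_right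
        field_sum_of_halves)
  with quotient_of_div[OF pr] have "(of_int p / of_int r :: rat) = of_int (2 * a) / of_int b"
    by simp
  moreover have "b \<noteq> 0" using ab(1) by auto
  ultimately have "p * b = 2 * a * r"
    using quotient_of_denom_pos[OF pr] by (auto simp: field_simps simp flip: of_int_mult)
  then have p_even: "even p" using ab(1) by (metis dvd_triv_left even_mult_iff mult.assoc)
  then have r_odd: "odd r" using quotient_of_coprime[OF pr] by fastforce
  have "p \<noteq> 0" using False quotient_of_div[OF pr] by auto
  then have "multiplicity (2::int) p \<ge> 1" using p_even by (intro multiplicity_geI) auto
  moreover have "multiplicity (2::int) r = 0"
    using r_odd by (intro not_dvd_imp_multiplicity_0) simp
  ultimately show ?thesis using False pr by (simp add: nu2_def)
qed

lemma fact_double_eq_odd_prod: "fact (2 * m) = (2::nat) ^ m * fact m * (\<Prod>k<m. 2 * k + 1)"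
proof (induction m)
  case 0
  then show ?case by simp
next
  case (Suc m)
  have "2 * Suc m = Suc (Suc (2 * m))" by simp
  then show ?case unfolding fact_Suc using Suc by (simp add: algebra_simps)
qed

lemma odd_prod_odd: "odd (\<Prod>k<m. 2 * k + 1 :: nat)"
  by (induction m) auto

text \<open>This is \<open>\<nu>\<^sub>2(n!) \<le> n - 1\<close>, proved via \<open>(2m)! = 2\<^sup>m m! (2m-1)!!\<close>.\<close>

lemma two_divisible_pow_divide_fact: "n \<ge> 1 \<Longrightarrow> two_divisible (2 ^ n / fact n)"
proof (induction n rule: less_induct)
  case (less n)
  show ?case
  proof (cases "n = 1")
    case True
    then show ?thesis using two_divisible_double[OF two_integral_of_int[of 1]] by simp
  next
    case False
    define m where "m = n div 2"
    then have m: "m \<ge> 1" "n = 2 * m \<or> n = 2 * m + 1"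
      using False less.prems by presburger+
    have "(fact (2 * m) :: rat) = 2 ^ m * fact m * of_nat (\<Prod>k<m. 2 * k + 1)"
      using arg_cong[OF fact_double_eq_odd_prod, of "of_nat :: nat \<Rightarrow> rat"] by simp
    moreover have "(2::rat) ^ (2 * m) = 2 ^ m * 2 ^ m" by (simp add: mult_2 power_add)
    ultimately have "(2::rat) ^ (2 * m) / fact (2 * m)
        = (2 ^ m / fact m) / of_int (int (\<Prod>k<m. 2 * k + 1))"
      by simp
    moreover have "two_divisible (2 ^ m / fact m)" using less.IH m by auto
    moreover have "odd (int (\<Prod>k<m. 2 * k + 1))" by (metis odd_prod_odd even_of_nat)
    ultimately have even_case: "two_divisible (2 ^ (2 * m) / fact (2 * m))"
      by (metis two_divisible_divide_odd)
    show ?thesis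
    proof (cases "n = 2 * m")
      case True
      then show ?thesis using even_case by simp
    next
      case False
      then have "n = 2 * m + 1" using m by auto
      then have "(2::rat) ^ n / fact n
          = 2 ^ (2 * m) / fact (2 * m) * of_int 2 / of_int (2 * int m + 1)"
        by (simp add: field_simps)
      then show ?thesis
        using two_divisible_divide_odd[OF two_divisible_mult[OF even_case two_integral_of_int[of 2]],
            of "2 * int m + 1"]
        by simp
    qed
  qed
qed

text \<open>The recursion \<open>A\<^sub>n = - \<Sum>\<^sub>i\<^sub><\<^sub>n A\<^sub>i B\<^sub>n\<^sub>-\<^sub>i\<close> is homogeneous of degree \<open>n\<close> in the factors \<open>2\<^sup>i\<close>.\<close>

lemma two_divisible_scaled_coeff_inverse:
  fixes A B :: "rat fps"
  assumes inverse: "A * B = 1" and B0: "B $ 0 = 1"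
    and B_coeffs: "\<And>k. k \<ge> 1 \<Longrightarrow> two_divisible (2 ^ k * B $ k)"
    and "n \<ge> 1"
  shows "two_divisible (2 ^ n * A $ n)"
  using \<open>n \<ge> 1\<close>
proof (induction n rule: less_induct)
  case (less n)
  have A0: "A $ 0 = 1" using arg_cong[OF inverse, of "\<lambda>F. F $ 0"] B0 by simp
  have A_integral: "two_integral (2 ^ i * A $ i)" if "i < n" for i
    using A0 less.IH[OF that] two_divisible_imp_two_integral two_integral_of_int[of 1]
    by (cases "i = 0") auto
  have "(\<Sum>i=0..n. A $ i * B $ (n - i)) = 0"
    using arg_cong[OF inverse, of "\<lambda>F. F $ n"] less.prems by (simp add: fps_mult_nth)
  then have "A $ n = - (\<Sum>i<n. A $ i * B $ (n - i))"
    using B0 by (simp add: atLeast0AtMost lessThan_Suc_atMost[symmetric] add_eq_0_iff)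
  then have "2 ^ n * A $ n = - (\<Sum>i<n. (2 ^ (n - i) * B $ (n - i)) * (2 ^ i * A $ i))"
    by (simp add: sum_distrib_left mult_ac flip: power_add)
  moreover have "two_divisible (2 ^ (n - i) * B $ (n - i) * (2 ^ i * A $ i))" if "i < n" for i
    using that by (intro two_divisible_mult B_coeffs A_integral) auto
  ultimately show ?case by (auto intro!: two_divisible_uminus two_divisible_sum)
qed

definition sinh_over_X :: "rat fps" where
  "sinh_over_X = Abs_fps (\<lambda>n. if even n then 1 / fact (n + 1) else 0)"

lemma sinh_eq_X_times_sinh_over_X:
  "fps_const (1/2) * (fps_exp 1 - fps_exp (-1)) = fps_X * sinh_over_X"
proof (rule fps_ext)
  fix n
  show "(fps_const (1/2) * (fps_exp 1 - fps_exp (-1::rat))) $ n = (fps_X * sinh_over_X) $ n"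
  proof (cases n)
    case 0
    then show ?thesis by (simp add: sinh_over_X_def)
  next
    case (Suc m)
    have "(fact m::rat) + fact m * of_nat m > 0" by (simp add: add_pos_nonneg)
    then show ?thesis using Suc by (cases "even m") (auto simp: sinh_over_X_def field_simps)
  qed
qed

lemma x_over_sinh_mult_sinh_over_X: "x_over_sinh * sinh_over_X = 1"
proof -
  have S0: "sinh_over_X $ 0 = 1" by (simp add: sinh_over_X_def)
  have "x_over_sinh = (fps_X * 1) / (fps_X * sinh_over_X)"
    by (simp add: x_over_sinh_def sinh_eq_X_times_sinh_over_X)
  also have "\<dots> = inverse sinh_over_X"
    using S0 by (subst div_mult_mult1) (simp_all add: fps_divide_unit)
  finally show ?thesis using S0 inverse_mult_eq_1[of sinh_over_X] by simp
qed

lemma two_divisible_scaled_sinh_over_X: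
  assumes "k \<ge> 1"
  shows "two_divisible (2 ^ k * sinh_over_X $ k)"
proof (cases "even k")
  case False
  then show ?thesis by (simp add: sinh_over_X_def two_divisible_zero)
next
  case True
  then have "(2::rat) ^ k * sinh_over_X $ k = 2 ^ k / fact k / of_int (int k + 1)"
    by (simp add: sinh_over_X_def field_simps)
  then show ?thesis
    using two_divisible_divide_odd[OF two_divisible_pow_divide_fact[OF assms], of "int k + 1"] True
    by simp
qed

lemma hcoef_eq_scaled_coeff:
  assumes "even n" "n \<noteq> 0"
  shows "hcoef n = 2 ^ n * x_over_sinh $ n"
proof -
  obtain i where i: "n = 2 * i" "i \<ge> 1" using assms by (auto elim!: evenE)
  have "(2::rat) * 2 ^ (2 * i - 1) = 2 ^ (2 * i)"
    using i by (simp flip: power_Suc)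
  then have factor:
      "(2::rat) ^ (2 * i + 1) * (2 ^ (2 * i - 1) - 1) = 2 ^ (2 * i) * (2 ^ (2 * i) - 2)"
    by (simp add: algebra_simps)
  have "(2::rat) ^ (2 * i) \<ge> 2 ^ 2" using i by (intro power_increasing) auto
  then have "(2::rat) ^ (2 * i) - 2 \<noteq> 0" by simp
  then show ?thesis
    using assms i factor by (simp add: hcoef_def bernU_def field_simps)
qed

lemma two_divisible_hcoef: "two_divisible (hcoef n)"
proof (cases "n = 0 \<or> odd n")
  case True
  then show ?thesis by (auto simp: hcoef_def two_divisible_zero)
next
  case False
  then show ?thesis
    using two_divisible_scaled_coeff_inverse[OF x_over_sinh_mult_sinh_over_X _
        two_divisible_scaled_sinh_over_X, of n]
    by (simp add: hcoef_eq_scaled_coeff sinh_over_X_def)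
qed

lemma hpart_distinct_parts:
  assumes "\<forall>i. count (mset lam) i \<in> {0, 1}"
  shows "hpart lam = (-1) ^ length lam * (\<Sum>P\<in>{P. partition_on {0..<length lam} P}.
     (-1) ^ card P * (\<Prod>b\<in>P. fact (card b - 1) * hcoef (\<Sum>j\<in>b. lam ! j)))"
proof -
  have "count (mset lam) i = 1" if "i \<in> set lam" for i
    using that assms by (metis empty_iff count_eq_zero_iff insert_iff set_mset_mset)
  then have "(\<Prod>i\<in>set lam. fact (count (mset lam) i) :: rat) = 1"
    by (intro prod.neutral) simp
  then show ?thesis by (simp add: hpart_def)
qed

lemma two_divisible_partition_sum:
  assumes "finite A" "A \<noteq> {}" and h: "\<And>n. two_divisible (h n)"
  shows "two_divisible (\<Sum>P\<in>{P. partition_on A P}.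
     (-1) ^ card P * (\<Prod>b\<in>P. fact (card b - 1) * h (\<Sum>j\<in>b. w j)))"
proof (rule two_divisible_sum)
  fix P assume "P \<in> {P. partition_on A P}"
  then have P: "partition_on A P" by simp
  then have "P \<noteq> {}" using assms(2) by (auto simp: partition_on_def)
  then have "two_divisible (\<Prod>b\<in>P. fact (card b - 1) * h (\<Sum>j\<in>b. w j))"
    using finite_elements[OF assms(1) P]
    by (intro two_divisible_prod two_divisible_mult_left two_integral_fact h)
  then show "two_divisible ((-1) ^ card P * (\<Prod>b\<in>P. fact (card b - 1) * h (\<Sum>j\<in>b. w j)))"
    by (rule two_divisible_mult_left[OF two_integral_neg_one_power])
qed

theorem lemma5p2:
  fixes lam :: "nat list"
  assumes "lam \<noteq> []"
    and "\<forall>x\<in>set lam. 0 < x"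
    and "\<forall>i. count (mset lam) i \<in> {0, 1}"
  shows "nu2 (hpart lam) \<ge> 1"
proof -
  have "two_divisible (\<Sum>P\<in>{P. partition_on {0..<length lam} P}.
     (-1) ^ card P * (\<Prod>b\<in>P. fact (card b - 1) * hcoef (\<Sum>j\<in>b. lam ! j)))"
    using assms(1) by (intro two_divisible_partition_sum two_divisible_hcoef) auto
  then have "two_divisible (hpart lam)"
    unfolding hpart_distinct_parts[OF assms(3)]
    by (rule two_divisible_mult_left[OF two_integral_neg_one_power])
  then show ?thesis by (rule two_divisible_imp_nu2_ge_1)
qed

end
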